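(* Let $f:\mathbb{R}^n_{>0}\to\mathbb{R}^n_{>0}$ be order-preserving, homogeneous, and multiplicatively convex. If $\mathcal{G}(f)$ has a unique final class $C$, then $f$ is strongly nonnegative if and only if $r(f^{[n]\setminus C}_0)<r(f^C_0)$.
   Context: $[n]=\{1,\dots,n\}$; entrywise order. Order-preserving: $x\le y\Rightarrow f(x)\le f(y)$; homogeneous: $f(tx)=tf(x)$ for $t>0$; multiplicatively convex: each entry of $\log\circ f\circ\exp$ is convex. $f$ extends continuously to an order-preserving homogeneous map on $\mathbb{R}^n_{\ge0}$, again denoted $f$. $P^J_0(x)_j=x_j$ for $j\in J$, $0$ otherwise; $f^J_0=P^J_0fP^J_0$; $r(g)=\inf_{x\in\mathbb{R}^n_{>0}}\max_ig(x)_i/x_i$. $\mathcal{G}(f)$ is the directed graph on $[n]$ with an arc $i\to j$ when $\lim_{t\to\infty}f(\exp(te_{\{j\}}))_i=\infty$. A final class is a strongly connected component with no arcs leaving it. $f$ is strongly nonnegative if $r(f^C_0)=r(f)$ for every final class $C$ and $r(f^C_0)<r(f)$ for every non-final strongly connected component $C$. *)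

theory Defs
  imports "HOL-Analysis.Analysis"
begin

text \<open>Vectors in R^n are modelled as real^'n with 'n a finite index type ([n] = UNIV).\<close>

definition pos_vec :: "real^'n \<Rightarrow> bool" where
  "pos_vec x \<longleftrightarrow> (\<forall>i. 0 < x $ i)"

definition order_preserving :: "(real^'n \<Rightarrow> real^'n) \<Rightarrow> bool" where
  "order_preserving f \<longleftrightarrow>
     (\<forall>x y. pos_vec x \<longrightarrow> pos_vec y \<longrightarrow> (\<forall>i. x $ i \<le> y $ i) \<longrightarrow> (\<forall>i. f x $ i \<le> f y $ i))"

definition homogeneous :: "(real^'n \<Rightarrow> real^'n) \<Rightarrow> bool" where
  "homogeneous f \<longleftrightarrow> (\<forall>x t. pos_vec x \<longrightarrow> 0 < t \<longrightarrow> f (t *\<^sub>R x) = t *\<^sub>R f x)"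

definition mult_convex :: "(real^'n \<Rightarrow> real^'n) \<Rightarrow> bool" where
  "mult_convex f \<longleftrightarrow> (\<forall>i. convex_on UNIV (\<lambda>y::real^'n. ln (f (\<chi> k. exp (y $ k)) $ i)))"

definition pos_self_map :: "(real^'n \<Rightarrow> real^'n) \<Rightarrow> bool" where
  "pos_self_map f \<longleftrightarrow> (\<forall>x. pos_vec x \<longrightarrow> pos_vec (f x))"

text \<open>Continuous extension to the closed cone: on the open cone it is f itself; on the boundary
  it is the (decreasing) limit of f(x + e 1) as e tends to 0+, i.e. the infimum over e > 0.\<close>
definition ext_map :: "(real^'n \<Rightarrow> real^'n) \<Rightarrow> real^'n \<Rightarrow> real^'n" where
  "ext_map f x = (if pos_vec x then f x
     else (\<chi> i. INF e\<in>{0<..}. f (x + e *\<^sub>R (\<chi> k. 1)) $ i))"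

definition proj0 :: "'n set \<Rightarrow> real^'n \<Rightarrow> real^'n" where
  "proj0 J x = (\<chi> j. if j \<in> J then x $ j else 0)"

definition restr0 :: "'n set \<Rightarrow> (real^'n \<Rightarrow> real^'n) \<Rightarrow> real^'n \<Rightarrow> real^'n" where
  "restr0 J f = proj0 J \<circ> ext_map f \<circ> proj0 J"

definition spec_rad :: "(real^'n \<Rightarrow> real^'n) \<Rightarrow> real" where
  "spec_rad g = Inf {Max (range (\<lambda>i. g x $ i / x $ i)) | x. pos_vec x}"

definition graph_arc :: "(real^'n \<Rightarrow> real^'n) \<Rightarrow> 'n \<Rightarrow> 'n \<Rightarrow> bool" where
  "graph_arc f i j \<longleftrightarrow>
     filterlim (\<lambda>t. f (\<chi> k. exp (t * (if k = j then 1 else 0))) $ i) at_top at_top"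

definition scc :: "(real^'n \<Rightarrow> real^'n) \<Rightarrow> 'n set \<Rightarrow> bool" where
  "scc f C \<longleftrightarrow> C \<noteq> {} \<and>
     (\<forall>i\<in>C. \<forall>j\<in>C. (graph_arc f)\<^sup>*\<^sup>* i j) \<and>
     (\<forall>i\<in>C. \<forall>j. (graph_arc f)\<^sup>*\<^sup>* i j \<and> (graph_arc f)\<^sup>*\<^sup>* j i \<longrightarrow> j \<in> C)"

definition final_class :: "(real^'n \<Rightarrow> real^'n) \<Rightarrow> 'n set \<Rightarrow> bool" where
  "final_class f C \<longleftrightarrow> scc f C \<and> (\<forall>i\<in>C. \<forall>j. graph_arc f i j \<longrightarrow> j \<in> C)"

definition strongly_nonneg :: "(real^'n \<Rightarrow> real^'n) \<Rightarrow> bool" where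
  "strongly_nonneg f \<longleftrightarrow>
     (\<forall>C. final_class f C \<longrightarrow> spec_rad (restr0 C f) = spec_rad f) \<and>
     (\<forall>C. scc f C \<and> \<not> final_class f C \<longrightarrow> spec_rad (restr0 C f) < spec_rad f)"

end

theory Submission
  imports Defs "HOL-Real_Asymp.Real_Asymp"
begin

(* Multiplicative convexity makes t \<mapsto> ln f(x with x_j replaced by exp t)_i convex on the
  whole line; if there is no arc i \<rightarrow> j it is also bounded above, hence constant, so f_i does
  not depend on x_j.  Therefore, if no arc leaves K \<subseteq> J, an x > 0 with
  f^K_0(x) < (r(f^K_0) + \<epsilon>) x on K, glued with a large multiple of a y > 0 with
  f^(J-K)_0(y) < (r(f^(J-K)_0) + \<epsilon>) y on J - K, shows
  r(f^J_0) \<le> max (r(f^K_0)) (r(f^(J-K)_0)).  Peeling off closed strongly connected pieces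
  bounds r(f^J_0) by r(f^C'_0) for some class C' meeting J.  The case J = [n], K = C gives
  r(f) \<le> max (r(f^C_0)) (r(f^(-C)_0)), whence the "if" direction; the class bound for J = -C
  gives the "only if" direction. *)

lemma convex_on_UNIV_bounded_above_antimono:
  fixes \<psi> :: "real \<Rightarrow> real"
  assumes cvx: "convex_on UNIV \<psi>" and bnd: "\<And>t. \<psi> t \<le> B" and "a \<le> b"
  shows "\<psi> b \<le> \<psi> a"
proof -
  \<comment> \<open>\<psi> b lies below the chord from (a, \<psi> a) to (T, \<psi> T), hence below the one to (T, B);
    let T \<rightarrow> \<infinity>.\<close>
  have "((\<lambda>T. (B - \<psi> a) / (T - a) * (b - a) + \<psi> a) \<longlongrightarrow> \<psi> a) at_top"
    by real_asymp
  moreover have "\<forall>\<^sub>F T in at_top. \<psi> b \<le> (B - \<psi> a) / (T - a) * (b - a) + \<psi> a"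
    using eventually_gt_at_top[of b]
  proof eventually_elim
    case (elim T)
    have "\<psi> b \<le> (\<psi> T - \<psi> a) / (T - a) * (b - a) + \<psi> a"
      using \<open>a \<le> b\<close> elim by (intro convex_onD_Icc' convex_on_subset[OF cvx]) auto
    also have "\<dots> \<le> (B - \<psi> a) / (T - a) * (b - a) + \<psi> a"
      using \<open>a \<le> b\<close> elim bnd[of T] by (intro add_right_mono mult_right_mono divide_right_mono) auto
    finally show ?case .
  qed
  ultimately show ?thesis
    by (rule tendsto_lowerbound) simp
qed

lemma convex_on_UNIV_bounded_above_const:
  fixes \<psi> :: "real \<Rightarrow> real"
  assumes cvx: "convex_on UNIV \<psi>" and bnd: "\<And>t. \<psi> t \<le> B"
  shows "\<psi> a = \<psi> b"
proof -
  have reflected: "convex_on UNIV (\<lambda>t. \<psi> (- t))"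
    unfolding convex_on_def
  proof (intro conjI ballI allI impI)
    fix x y u v :: real
    assume "0 \<le> u" "0 \<le> v" "u + v = 1"
    then have "\<psi> (u *\<^sub>R (- x) + v *\<^sub>R (- y)) \<le> u * \<psi> (- x) + v * \<psi> (- y)"
      using cvx unfolding convex_on_def by blast
    then show "\<psi> (- (u *\<^sub>R x + v *\<^sub>R y)) \<le> u * \<psi> (- x) + v * \<psi> (- y)"
      by simp
  qed simp
  have "\<psi> y \<le> \<psi> x" and "\<psi> x \<le> \<psi> y" if "x \<le> y" for x y
    using convex_on_UNIV_bounded_above_antimono[OF cvx bnd that]
      convex_on_UNIV_bounded_above_antimono[OF reflected bnd, of "- y" "- x"] that
    by simp_all
  then show ?thesis
    by (meson antisym linorder_linear)
qed

lemma mono_unbounded_imp_filterlim_at_top: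
  fixes h :: "'a::linorder \<Rightarrow> real"
  assumes "mono h" and "\<not> bdd_above (range h)"
  shows "filterlim h at_top at_top"
  unfolding filterlim_at_top eventually_at_top_linorder
proof
  fix Z
  obtain t where "Z < h t"
    using assms(2) by (meson bdd_aboveI2 not_le)
  then show "\<exists>N. \<forall>t'\<ge>N. Z \<le> h t'"
    using monoD[OF assms(1)] by (meson less_le_trans less_imp_le)
qed

lemma pos_vec_imp_nonneg: "pos_vec x \<Longrightarrow> 0 \<le> x"
  by (simp add: pos_vec_def less_eq_vec_def less_imp_le)

lemma pos_vec_one [simp]: "pos_vec 1"
  by (simp add: pos_vec_def)

lemma pos_vec_add_const: "0 \<le> x \<Longrightarrow> 0 < e \<Longrightarrow> pos_vec (x + e *\<^sub>R 1)"
  by (simp add: pos_vec_def less_eq_vec_def add_nonneg_pos)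

lemma pos_vec_Min_gt0: "pos_vec x \<Longrightarrow> 0 < Min (range (($) x))"
  using Min_in[of "range (($) x)"] by (auto simp: pos_vec_def)

lemma pos_vec_Max_gt0: "pos_vec x \<Longrightarrow> 0 < Max (range (($) x))"
  by (auto simp: pos_vec_def Max_gr_iff)

lemma proj0_nonneg: "pos_vec x \<Longrightarrow> 0 \<le> proj0 J x"
  by (simp add: pos_vec_def proj0_def less_eq_vec_def less_imp_le)

lemma Max_ratio_nonneg:
  assumes "pos_vec x" and "0 \<le> y"
  shows "0 \<le> Max (range (\<lambda>i. y $ i / x $ i))"
  using assms by (auto simp: Max_ge_iff pos_vec_def less_eq_vec_def less_imp_le)

lemma spec_rad_le_Max_ratio:
  assumes "\<And>x. pos_vec x \<Longrightarrow> 0 \<le> g x" and "pos_vec x"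
  shows "spec_rad g \<le> Max (range (\<lambda>i. g x $ i / x $ i))"
  unfolding spec_rad_def
  by (rule cInf_lower) (auto intro!: bdd_belowI[where m=0] Max_ratio_nonneg assms)

lemma spec_rad_le:
  assumes "\<And>x. pos_vec x \<Longrightarrow> 0 \<le> g x" and "pos_vec x" and "\<And>i. g x $ i \<le> c * x $ i"
  shows "spec_rad g \<le> c"
proof -
  have "Max (range (\<lambda>i. g x $ i / x $ i)) \<le> c"
    using assms(2,3) by (simp add: pos_vec_def divide_le_eq)
  moreover have "spec_rad g \<le> Max (range (\<lambda>i. g x $ i / x $ i))"
    using assms(1,2) by (rule spec_rad_le_Max_ratio)
  ultimately show ?thesis
    by linarith
qed

lemma spec_rad_ge:
  assumes "\<And>x. pos_vec x \<Longrightarrow> \<exists>i. c * x $ i \<le> g x $ i"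
  shows "c \<le> spec_rad g"
  unfolding spec_rad_def
proof (rule cInf_greatest)
  show "{Max (range (\<lambda>i. g x $ i / x $ i)) | x. pos_vec x} \<noteq> {}"
    using pos_vec_one by blast
next
  fix m assume "m \<in> {Max (range (\<lambda>i. g x $ i / x $ i)) | x. pos_vec x}"
  then obtain x where x: "pos_vec x" and m: "m = Max (range (\<lambda>i. g x $ i / x $ i))"
    by blast
  obtain i where "c * x $ i \<le> g x $ i"
    using assms[OF x] by blast
  then show "c \<le> m"
    using x unfolding m by (auto simp: Max_ge_iff pos_vec_def le_divide_eq)
qed

lemma spec_rad_nonneg:
  assumes "\<And>x. pos_vec x \<Longrightarrow> 0 \<le> g x"
  shows "0 \<le> spec_rad g"
  by (rule spec_rad_ge) (use assms in \<open>auto simp: less_eq_vec_def\<close>)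

lemma spec_rad_approx:
  assumes "\<And>x. pos_vec x \<Longrightarrow> 0 \<le> g x" and "0 < e"
  obtains x where "pos_vec x" and "\<And>i. g x $ i < (spec_rad g + e) * x $ i"
proof -
  let ?S = "{Max (range (\<lambda>i. g x $ i / x $ i)) | x. pos_vec x}"
  have "?S \<noteq> {}" and "bdd_below ?S"
    using pos_vec_one by (blast, auto intro!: bdd_belowI[where m=0] Max_ratio_nonneg assms(1))
  moreover have "Inf ?S < spec_rad g + e"
    using assms(2) by (simp add: spec_rad_def)
  ultimately obtain x where x: "pos_vec x" and "Max (range (\<lambda>i. g x $ i / x $ i)) < spec_rad g + e"
    by (auto simp: cInf_less_iff)
  then have "g x $ i / x $ i < spec_rad g + e" for i
    by (simp add: Max_less_iff)
  then show ?thesis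
    using x that by (simp add: pos_vec_def divide_less_eq)
qed

lemma spec_rad_mono:
  assumes "\<And>x. pos_vec x \<Longrightarrow> 0 \<le> g x" and "\<And>x. pos_vec x \<Longrightarrow> g x \<le> h x"
  shows "spec_rad g \<le> spec_rad h"
proof (rule field_le_epsilon)
  fix e :: real assume "0 < e"
  have "0 \<le> h x" if "pos_vec x" for x
    using assms that by (meson order_trans)
  then obtain x where x: "pos_vec x" and "\<And>i. h x $ i < (spec_rad h + e) * x $ i"
    using spec_rad_approx \<open>0 < e\<close> by metis
  moreover have "g x $ i \<le> h x $ i" for i
    using assms(2)[OF x] by (simp add: less_eq_vec_def)
  ultimately have "g x $ i \<le> (spec_rad h + e) * x $ i" for i
    by (meson less_imp_le order_trans)
  then show "spec_rad g \<le> spec_rad h + e"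
    using spec_rad_le[of g x] assms(1) x by blast
qed

lemma spec_rad_cong:
  assumes "\<And>x. pos_vec x \<Longrightarrow> g x = h x"
  shows "spec_rad g = spec_rad h"
  unfolding spec_rad_def setcompr_eq_image by (metis (no_types, lifting) assms image_cong mem_Collect_eq)

lemma ex_closed_strongly_connected_subset:
  fixes R :: "'a \<Rightarrow> 'a \<Rightarrow> bool"
  assumes "finite J" and "J \<noteq> {}"
  obtains K where "K \<subseteq> J" and "K \<noteq> {}" and "\<And>k j. k \<in> K \<Longrightarrow> j \<in> J - K \<Longrightarrow> \<not> R k j"
    and "\<And>k k'. k \<in> K \<Longrightarrow> k' \<in> K \<Longrightarrow> R\<^sup>*\<^sup>* k k'"
proof -
  \<comment> \<open>A vertex whose reachable part of J is minimal is reached back from all of it.\<close>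
  define S where "S i = {j \<in> J. R\<^sup>*\<^sup>* i j}" for i
  obtain i where i: "i \<in> J" and i_min: "\<And>k. k \<in> J \<Longrightarrow> card (S i) \<le> card (S k)"
    using ex_has_least_nat[of "\<lambda>i. i \<in> J" _ "\<lambda>i. card (S i)"] assms(2) by blast
  have reaches_back: "R\<^sup>*\<^sup>* k i" if "k \<in> S i" for k
  proof -
    have "S k \<subseteq> S i"
      using that by (auto simp: S_def intro: rtranclp_trans)
    moreover have "card (S i) \<le> card (S k)"
      using that i_min by (simp add: S_def)
    moreover have "finite (S i)"
      using assms(1) by (simp add: S_def)
    ultimately have "S k = S i"
      by (meson card_mono card_subset_eq le_antisym)
    then show ?thesis
      using i by (auto simp: S_def)
  qed
  show ?thesis
  proof (rule that[of "S i"])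
    show "S i \<subseteq> J" and "S i \<noteq> {}"
      using i by (auto simp: S_def)
    show "\<not> R k j" if "k \<in> S i" and "j \<in> J - S i" for k j
      using that by (auto simp: S_def intro: rtranclp.rtrancl_into_rtrancl)
    show "R\<^sup>*\<^sup>* k k'" if "k \<in> S i" and "k' \<in> S i" for k k'
      using reaches_back[OF that(1)] that(2) by (auto simp: S_def intro: rtranclp_trans)
  qed
qed

lemma scc_of_vertex: "scc f {j. (graph_arc f)\<^sup>*\<^sup>* i j \<and> (graph_arc f)\<^sup>*\<^sup>* j i}"
  by (auto simp: scc_def intro: rtranclp_trans)

lemma scc_eq:
  assumes "scc f C" and "scc f C'" and "k \<in> C" and "k \<in> C'"
  shows "C = C'"
  using assms unfolding scc_def by blast

lemma ex_scc_superset: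
  assumes "K \<noteq> {}" and "\<And>k k'. k \<in> K \<Longrightarrow> k' \<in> K \<Longrightarrow> (graph_arc f)\<^sup>*\<^sup>* k k'"
  obtains C where "scc f C" and "K \<subseteq> C"
proof -
  obtain k where "k \<in> K"
    using assms(1) by blast
  then have "K \<subseteq> {j. (graph_arc f)\<^sup>*\<^sup>* k j \<and> (graph_arc f)\<^sup>*\<^sup>* j k}"
    using assms(2) by blast
  then show ?thesis
    using that scc_of_vertex by blast
qed

lemma scc_subset_Compl_final_class:
  assumes "final_class f C" and "scc f C'" and "C' \<noteq> C"
  shows "C' \<subseteq> - C"
  using assms scc_eq[of f C' C] unfolding final_class_def by blast

locale homogeneous_cone_map =
  fixes f :: "real^'n \<Rightarrow> real^'n"
  assumes pos_self_map: "pos_self_map f"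
    and order_preserving: "order_preserving f"
    and homogeneous: "homogeneous f"
begin

lemma nth_pos: "pos_vec x \<Longrightarrow> 0 < f x $ i"
  using pos_self_map by (simp add: pos_self_map_def pos_vec_def)

lemma nth_mono: "pos_vec x \<Longrightarrow> pos_vec y \<Longrightarrow> x \<le> y \<Longrightarrow> f x $ i \<le> f y $ i"
  using order_preserving by (simp add: order_preserving_def less_eq_vec_def)

lemma map_scaleR: "pos_vec x \<Longrightarrow> 0 < t \<Longrightarrow> f (t *\<^sub>R x) = t *\<^sub>R f x"
  using homogeneous by (simp add: homogeneous_def)

lemma shift_bdd_below: "0 \<le> x \<Longrightarrow> bdd_below ((\<lambda>e. f (x + e *\<^sub>R 1) $ i) ` {0<..})"
  by (rule bdd_belowI2[where m=0]) (auto intro: less_imp_le nth_pos pos_vec_add_const)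

lemma INF_shift_eq:
  assumes x: "pos_vec x"
  shows "(INF e\<in>{0<..}. f (x + e *\<^sub>R 1) $ i) = f x $ i"
proof (rule antisym)
  show "(INF e\<in>{0<..}. f (x + e *\<^sub>R 1) $ i) \<le> f x $ i"
  proof (rule field_le_epsilon)
    fix d :: real assume d: "0 < d"
    define m where "m = Min (range (($) x))"
    have m: "0 < m" and m_le: "\<And>k. m \<le> x $ k"
      using pos_vec_Min_gt0[OF x] by (simp_all add: m_def)
    define e where "e = d * m / f x $ i"
    have e: "0 < e"
      using d m nth_pos[OF x] by (simp add: e_def)
    have "(INF e\<in>{0<..}. f (x + e *\<^sub>R 1) $ i) \<le> f (x + e *\<^sub>R 1) $ i"
      using e by (intro cINF_lower shift_bdd_below pos_vec_imp_nonneg x) auto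
    also have "\<dots> \<le> f ((1 + e / m) *\<^sub>R x) $ i"
    proof (rule nth_mono)
      have "e \<le> e / m * x $ k" for k
        using m_le[of k] m e by (simp add: field_simps)
      then show "x + e *\<^sub>R 1 \<le> (1 + e / m) *\<^sub>R x"
        by (simp add: less_eq_vec_def algebra_simps)
    qed (use x e m in \<open>auto simp: pos_vec_def intro!: add_pos_pos mult_pos_pos\<close>)
    also have "\<dots> = (1 + e / m) * f x $ i"
      using map_scaleR[OF x, of "1 + e / m"] e m by (simp add: add_pos_pos)
    also have "\<dots> = f x $ i + d"
      using m nth_pos[OF x, of i] by (simp add: e_def field_simps)
    finally show "(INF e\<in>{0<..}. f (x + e *\<^sub>R 1) $ i) \<le> f x $ i + d" .
  qed
  show "f x $ i \<le> (INF e\<in>{0<..}. f (x + e *\<^sub>R 1) $ i)"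
    using x by (intro cINF_greatest nth_mono)
      (auto intro: pos_vec_add_const pos_vec_imp_nonneg simp: less_eq_vec_def)
qed

lemma ext_map_pos: "pos_vec x \<Longrightarrow> ext_map f x = f x"
  by (simp add: ext_map_def)

lemma ext_map_eq_INF: "0 \<le> x \<Longrightarrow> ext_map f x $ i = (INF e\<in>{0<..}. f (x + e *\<^sub>R 1) $ i)"
proof (cases "pos_vec x")
  case True
  then show ?thesis by (simp add: ext_map_pos INF_shift_eq)
next
  case False
  then show ?thesis by (simp add: ext_map_def one_vec_def)
qed

lemma ext_map_less_shift:
  assumes "0 \<le> x" and "ext_map f x $ i < c"
  obtains e where "0 < e" and "f (x + e *\<^sub>R 1) $ i < c"
  using assms by (auto simp: ext_map_eq_INF cINF_less_iff shift_bdd_below)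

lemma ext_map_nonneg: "0 \<le> x \<Longrightarrow> 0 \<le> ext_map f x"
  unfolding less_eq_vec_def[of 0 "ext_map f x"]
  by (auto simp: ext_map_eq_INF intro!: cINF_greatest pos_vec_add_const less_imp_le[OF nth_pos])

lemma ext_map_mono:
  assumes "0 \<le> x" and "x \<le> y"
  shows "ext_map f x $ i \<le> ext_map f y $ i"
proof -
  have "0 \<le> y"
    using assms by (rule order_trans)
  then show ?thesis
    using assms
    by (auto simp: ext_map_eq_INF less_eq_vec_def intro!: cINF_superset_mono shift_bdd_below nth_mono pos_vec_add_const)
qed

lemma ext_map_uniform_shift:
  assumes "0 \<le> x" and "\<And>i. i \<in> L \<Longrightarrow> ext_map f x $ i < c i"
  obtains e where "0 < e" and "\<And>i. i \<in> L \<Longrightarrow> f (x + e *\<^sub>R 1) $ i < c i"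
proof -
  have "\<forall>i\<in>L. \<exists>e>0. f (x + e *\<^sub>R 1) $ i < c i"
    using ext_map_less_shift[OF assms(1) assms(2)] by metis
  then obtain es where es: "\<And>i. i \<in> L \<Longrightarrow> 0 < es i \<and> f (x + es i *\<^sub>R 1) $ i < c i"
    by metis
  define e where "e = Min (insert 1 (es ` L))"
  have e: "0 < e" and e_le: "\<And>i. i \<in> L \<Longrightarrow> e \<le> es i"
    using es by (auto simp: e_def)
  have "f (x + e *\<^sub>R 1) $ i < c i" if "i \<in> L" for i
  proof -
    have "f (x + e *\<^sub>R 1) $ i \<le> f (x + es i *\<^sub>R 1) $ i"
      using assms(1) e e_le[OF that] es[OF that]
      by (intro nth_mono pos_vec_add_const) (auto simp: less_eq_vec_def)
    then show ?thesis
      using es[OF that] by linarith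
  qed
  then show ?thesis
    using e that by blast
qed

lemma restr0_nth: "restr0 J f x $ i = (if i \<in> J then ext_map f (proj0 J x) $ i else 0)"
  by (simp add: restr0_def proj0_def)

lemma restr0_nonneg: "pos_vec x \<Longrightarrow> 0 \<le> restr0 J f x"
  using ext_map_nonneg[OF proj0_nonneg] by (simp add: less_eq_vec_def restr0_nth)

lemma spec_rad_restr0_nonneg: "0 \<le> spec_rad (restr0 J f)"
  by (rule spec_rad_nonneg) (rule restr0_nonneg)

lemma spec_rad_restr0_mono:
  assumes "J \<subseteq> K"
  shows "spec_rad (restr0 J f) \<le> spec_rad (restr0 K f)"
proof (rule spec_rad_mono)
  fix x :: "real^'n" assume x: "pos_vec x"
  show "0 \<le> restr0 J f x"
    by (rule restr0_nonneg[OF x])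
  have "proj0 J x \<le> proj0 K x"
    using x assms by (auto simp: proj0_def less_eq_vec_def pos_vec_def less_imp_le)
  then show "restr0 J f x \<le> restr0 K f x"
    using assms ext_map_nonneg[OF proj0_nonneg[OF x], of K]
    by (auto simp: less_eq_vec_def restr0_nth intro: ext_map_mono proj0_nonneg[OF x])
qed

lemma spec_rad_restr0_UNIV: "spec_rad (restr0 UNIV f) = spec_rad f"
  by (rule spec_rad_cong) (simp add: vec_eq_iff restr0_nth proj0_def ext_map_pos)

lemma spec_rad_restr0_empty: "spec_rad (restr0 {} f) = 0"
  by (rule antisym[OF spec_rad_le[where x=1] spec_rad_restr0_nonneg])
    (auto simp: restr0_nth intro: restr0_nonneg)

lemma spec_rad_pos: "0 < spec_rad f"
proof -
  define c where "c = Min (range (\<lambda>k. f 1 $ k))"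
  have "0 < c"
    unfolding c_def using nth_pos[OF pos_vec_one] Min_in[of "range (\<lambda>k. f 1 $ k)"] by auto
  moreover have "c \<le> spec_rad f"
  proof (rule spec_rad_ge)
    fix x :: "real^'n" assume x: "pos_vec x"
    define m where "m = Min (range (($) x))"
    have "m \<in> range (($) x)"
      unfolding m_def by (rule Min_in) auto
    then obtain i where i: "x $ i = m"
      by auto
    have m: "0 < m"
      using pos_vec_Min_gt0[OF x] by (simp add: m_def)
    have "c * x $ i \<le> m * f 1 $ i"
      using i m by (simp add: c_def)
    also have "\<dots> = f (m *\<^sub>R 1) $ i"
      using map_scaleR[OF pos_vec_one m] by simp
    also have "\<dots> \<le> f x $ i"
      using m x by (intro nth_mono) (auto simp: less_eq_vec_def pos_vec_def m_def)
    finally show "\<exists>i. c * x $ i \<le> f x $ i" ..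
  qed
  ultimately show ?thesis
    by linarith
qed

lemma spec_rad_restr0_le: "spec_rad (restr0 J f) \<le> spec_rad f"
  using spec_rad_restr0_mono[of J UNIV] by (simp only: spec_rad_restr0_UNIV subset_UNIV)

lemma restr0_nth_le_scaled:
  assumes z: "pos_vec z" and w: "pos_vec w" and "0 < s" and "proj0 J z \<le> s *\<^sub>R w"
  shows "restr0 J f z $ i \<le> s * f w $ i"
proof -
  have "ext_map f (proj0 J z) $ i \<le> ext_map f (s *\<^sub>R w) $ i"
    using assms by (intro ext_map_mono proj0_nonneg)
  also have "ext_map f (s *\<^sub>R w) = s *\<^sub>R f w"
    using w \<open>0 < s\<close> by (simp add: ext_map_pos map_scaleR pos_vec_def)
  finally show ?thesis
    using nth_pos[OF w, of i] \<open>0 < s\<close> by (simp add: restr0_nth)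
qed

lemma spec_rad_restr0_approx_shift:
  assumes "0 < \<epsilon>"
  obtains y e where "pos_vec y" and "0 < e"
    and "\<And>i. i \<in> L \<Longrightarrow> f (proj0 L y + e *\<^sub>R 1) $ i < (spec_rad (restr0 L f) + \<epsilon>) * y $ i"
proof -
  obtain y where y: "pos_vec y"
    and y_sub: "\<And>i. restr0 L f y $ i < (spec_rad (restr0 L f) + \<epsilon>) * y $ i"
    using spec_rad_approx[of "restr0 L f", OF restr0_nonneg assms] by blast
  have "ext_map f (proj0 L y) $ i < (spec_rad (restr0 L f) + \<epsilon>) * y $ i" if "i \<in> L" for i
    using that y_sub[of i] by (simp add: restr0_nth)
  then obtain e where "0 < e"
    and "\<And>i. i \<in> L \<Longrightarrow> f (proj0 L y + e *\<^sub>R 1) $ i < (spec_rad (restr0 L f) + \<epsilon>) * y $ i"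
    using ext_map_uniform_shift[OF proj0_nonneg[OF y], where c = "\<lambda>i. (spec_rad (restr0 L f) + \<epsilon>) * y $ i"]
    by blast
  then show ?thesis
    using that[OF y] by blast
qed

lemma ray_bounded_if_no_arc:
  assumes "\<not> graph_arc f i j"
  obtains B where "\<And>t. f (\<chi> k. exp (t * (if k = j then 1 else 0))) $ i \<le> B"
proof -
  let ?h = "\<lambda>t. f (\<chi> k. exp (t * (if k = j then 1 else 0))) $ i"
  have "mono ?h"
    by (intro monoI nth_mono) (auto simp: pos_vec_def less_eq_vec_def)
  have "bdd_above (range ?h)"
  proof (rule ccontr)
    assume "\<not> bdd_above (range ?h)"
    with \<open>mono ?h\<close> have "filterlim ?h at_top at_top"
      by (rule mono_unbounded_imp_filterlim_at_top)
    then show False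
      using assms by (simp add: graph_arc_def)
  qed
  then show ?thesis
    using that by (auto simp: bdd_above_def)
qed

lemma nth_update_bounded_if_no_arc:
  assumes "\<not> graph_arc f i j" and x: "pos_vec x"
  obtains B where "\<And>a. f (\<chi> k. if k = j then exp a else x $ k) $ i \<le> B"
proof -
  obtain B where B: "\<And>t. f (\<chi> k. exp (t * (if k = j then 1 else 0))) $ i \<le> B"
    using ray_bounded_if_no_arc[OF assms(1)] by blast
  define M where "M = Max (range (($) x))"
  have M: "0 < M" and le_M: "\<And>k. x $ k \<le> M"
    using pos_vec_Max_gt0[OF x] by (simp_all add: M_def)
  have "f (\<chi> k. if k = j then exp a else x $ k) $ i \<le> M * B" for a
  proof -
    define v where "v = (\<chi> k. exp ((a - ln M) * (if k = j then 1 else 0)))"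
    have v: "pos_vec v"
      by (simp add: v_def pos_vec_def)
    have "f (\<chi> k. if k = j then exp a else x $ k) $ i \<le> f (M *\<^sub>R v) $ i"
      using x v M le_M
      by (intro nth_mono) (auto simp: pos_vec_def less_eq_vec_def v_def exp_diff)
    also have "\<dots> \<le> M * B"
      using map_scaleR[OF v M] B[of "a - ln M"] M by (simp add: v_def)
    finally show ?thesis .
  qed
  then show ?thesis
    using that by blast
qed

end

locale mult_convex_cone_map = homogeneous_cone_map +
  assumes mult_convex: "mult_convex f"
begin

lemma convex_on_ln_nth_update:
  assumes x: "pos_vec x"
  shows "convex_on UNIV (\<lambda>a. ln (f (\<chi> k. if k = j then exp a else x $ k) $ i))"
    (is "convex_on UNIV ?\<psi>")
proof (rule convex_onI)
  fix t a b :: real assume "0 < t" "t < 1"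
  define Y where "Y a = (\<chi> k. if k = j then a else ln (x $ k))" for a
  have \<psi>_Y: "?\<psi> a = ln (f (\<chi> k. exp (Y a $ k)) $ i)" for a
    using x by (simp add: Y_def pos_vec_def if_distrib cong: if_cong)
  have cvx: "convex_on UNIV (\<lambda>y. ln (f (\<chi> k. exp (y $ k)) $ i))"
    using mult_convex by (simp add: mult_convex_def)
  have "Y ((1 - t) *\<^sub>R a + t *\<^sub>R b) = (1 - t) *\<^sub>R Y a + t *\<^sub>R Y b"
    by (simp add: Y_def vec_eq_iff algebra_simps)
  then have "?\<psi> ((1 - t) *\<^sub>R a + t *\<^sub>R b) = ln (f (\<chi> k. exp (((1 - t) *\<^sub>R Y a + t *\<^sub>R Y b) $ k)) $ i)"
    by (simp only: \<psi>_Y)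
  also have "\<dots> \<le> (1 - t) * ?\<psi> a + t * ?\<psi> b"
    unfolding \<psi>_Y by (rule convex_onD[OF cvx]) (use \<open>0 < t\<close> \<open>t < 1\<close> in auto)
  finally show "?\<psi> ((1 - t) *\<^sub>R a + t *\<^sub>R b) \<le> (1 - t) * ?\<psi> a + t * ?\<psi> b" .
qed simp

lemma nth_update_eq_if_no_arc:
  assumes no_arc: "\<not> graph_arc f i j" and x: "pos_vec x" and "0 < c"
  shows "f (\<chi> k. if k = j then c else x $ k) $ i = f x $ i"
proof -
  define upd where "upd a = (\<chi> k. if k = j then exp a else x $ k)" for a
  have upd_pos: "0 < f (upd a) $ i" for a
    using x by (intro nth_pos) (simp add: upd_def pos_vec_def)
  obtain B where "\<And>a. f (upd a) $ i \<le> B"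
    using nth_update_bounded_if_no_arc[OF no_arc x] unfolding upd_def by blast
  then have "ln (f (upd a) $ i) \<le> ln B" for a
    using upd_pos by (rule ln_mono)
  with convex_on_ln_nth_update[OF x] have "ln (f (upd (ln c)) $ i) = ln (f (upd (ln (x $ j))) $ i)"
    unfolding upd_def by (rule convex_on_UNIV_bounded_above_const)
  moreover have "upd (ln c) = (\<chi> k. if k = j then c else x $ k)" and "upd (ln (x $ j)) = x"
    using x \<open>0 < c\<close> by (auto simp: upd_def pos_vec_def vec_eq_iff)
  ultimately show ?thesis
    using upd_pos[of "ln c"] nth_pos[OF x, of i] by simp
qed

lemma nth_eq_if_no_arcs:
  assumes "pos_vec x" and "pos_vec y" and "\<And>j. x $ j \<noteq> y $ j \<Longrightarrow> \<not> graph_arc f i j"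
  shows "f x $ i = f y $ i"
  using assms
proof (induction "card {j. x $ j \<noteq> y $ j}" arbitrary: x rule: less_induct)
  case less
  show ?case
  proof (cases "x = y")
    case False
    then obtain j where j: "x $ j \<noteq> y $ j"
      by (auto simp: vec_eq_iff)
    define z where "z = (\<chi> k. if k = j then y $ j else x $ k)"
    have "f z $ i = f x $ i"
      unfolding z_def using less.prems j by (intro nth_update_eq_if_no_arc) (auto simp: pos_vec_def)
    moreover have "f z $ i = f y $ i"
    proof (rule less.hyps)
      have "{k. z $ k \<noteq> y $ k} \<subset> {k. x $ k \<noteq> y $ k}"
        using j by (auto simp: z_def)
      then show "card {k. z $ k \<noteq> y $ k} < card {k. x $ k \<noteq> y $ k}"
        by (simp add: psubset_card_mono)
    qed (use less.prems in \<open>auto simp: z_def pos_vec_def split: if_splits\<close>)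
    ultimately show ?thesis
      by simp
  qed simp
qed

lemma ext_map_eq_if_no_arcs:
  assumes "0 \<le> u" and "0 \<le> v" and "\<And>j. u $ j \<noteq> v $ j \<Longrightarrow> \<not> graph_arc f i j"
  shows "ext_map f u $ i = ext_map f v $ i"
  unfolding ext_map_eq_INF[OF assms(1)] ext_map_eq_INF[OF assms(2)]
  using assms by (intro INF_cong refl nth_eq_if_no_arcs pos_vec_add_const) auto

lemma restr0_nth_eq_if_closed:
  assumes "K \<subseteq> J" and "i \<in> K" and no_arc: "\<And>j. j \<in> J - K \<Longrightarrow> \<not> graph_arc f i j"
    and x: "pos_vec x" and z: "pos_vec z" and "\<And>k. k \<in> K \<Longrightarrow> z $ k = x $ k"
  shows "restr0 J f z $ i = restr0 K f x $ i"
proof -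
  have "ext_map f (proj0 J z) $ i = ext_map f (proj0 K x) $ i"
  proof (rule ext_map_eq_if_no_arcs[OF proj0_nonneg[OF z] proj0_nonneg[OF x]])
    fix j assume "proj0 J z $ j \<noteq> proj0 K x $ j"
    then have "j \<in> J - K"
      using assms(1,6) by (auto simp: proj0_def split: if_splits)
    then show "\<not> graph_arc f i j"
      by (rule no_arc)
  qed
  then show ?thesis
    using assms(1,2) by (auto simp: restr0_nth)
qed

lemma restr0_glue_sub_eigenvectors:
  assumes "K \<subseteq> J" and no_arc: "\<And>i j. i \<in> K \<Longrightarrow> j \<in> J - K \<Longrightarrow> \<not> graph_arc f i j"
    and x: "pos_vec x" and x_sub: "\<And>i. restr0 K f x $ i \<le> c * x $ i"
    and y: "pos_vec y" and "0 < e"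
    and y_sub: "\<And>i. i \<in> J - K \<Longrightarrow> f (proj0 (J - K) y + e *\<^sub>R 1) $ i \<le> c * y $ i"
    and "0 \<le> c"
  obtains z where "pos_vec z" and "\<And>i. restr0 J f z $ i \<le> c * z $ i"
proof -
  define w where "w = proj0 (J - K) y + e *\<^sub>R 1"
  define s where "s = Max (range (($) x)) / e"
  define z where "z = (\<chi> k. if k \<in> K then x $ k else if k \<in> J then s * y $ k else 1)"
  have w: "pos_vec w"
    unfolding w_def using y \<open>0 < e\<close> by (intro pos_vec_add_const proj0_nonneg)
  have "0 < s" and z: "pos_vec z"
    using x y \<open>0 < e\<close> pos_vec_Max_gt0[OF x] by (auto simp: s_def z_def pos_vec_def)
  \<comment> \<open>The choice of s makes the K-coordinates of z fit under s e.\<close>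
  have z_le: "proj0 J z \<le> s *\<^sub>R w"
    using assms(1) \<open>0 < s\<close> \<open>0 < e\<close> y pos_vec_Max_gt0[OF x]
    by (auto simp: less_eq_vec_def proj0_def z_def w_def s_def pos_vec_def
        intro: less_imp_le divide_right_mono mult_left_mono)
  have "restr0 J f z $ i \<le> c * z $ i" for i
  proof -
    consider "i \<notin> J" | "i \<in> K" | "i \<in> J - K"
      by blast
    then show ?thesis
    proof cases
      case 1
      then show ?thesis
        using z \<open>0 \<le> c\<close> by (simp add: restr0_nth pos_vec_def less_imp_le)
    next
      case 2
      then have "restr0 J f z $ i = restr0 K f x $ i"
        using assms(1) no_arc x z by (intro restr0_nth_eq_if_closed) (auto simp: z_def)
      then show ?thesis
        using 2 x_sub[of i] by (simp add: z_def)
    next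
      case 3
      have "restr0 J f z $ i \<le> s * f w $ i"
        using z w \<open>0 < s\<close> z_le by (rule restr0_nth_le_scaled)
      also have "\<dots> \<le> s * (c * y $ i)"
        using y_sub[OF 3] \<open>0 < s\<close> by (simp add: w_def)
      also have "\<dots> = c * z $ i"
        using 3 by (simp add: z_def)
      finally show ?thesis .
    qed
  qed
  then show ?thesis
    using z that by blast
qed

lemma spec_rad_restr0_le_max:
  assumes "K \<subseteq> J" and no_arc: "\<And>i j. i \<in> K \<Longrightarrow> j \<in> J - K \<Longrightarrow> \<not> graph_arc f i j"
  shows "spec_rad (restr0 J f) \<le> max (spec_rad (restr0 K f)) (spec_rad (restr0 (J - K) f))"
    (is "_ \<le> ?R")
proof (rule field_le_epsilon)
  fix \<epsilon> :: real assume "0 < \<epsilon>"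
  have c: "spec_rad (restr0 K f) + \<epsilon> \<le> ?R + \<epsilon>" "spec_rad (restr0 (J - K) f) + \<epsilon> \<le> ?R + \<epsilon>"
    "0 \<le> ?R + \<epsilon>"
    using spec_rad_restr0_nonneg[of K] \<open>0 < \<epsilon>\<close> by auto
  obtain x where x: "pos_vec x"
    and x_sub: "\<And>i. restr0 K f x $ i < (spec_rad (restr0 K f) + \<epsilon>) * x $ i"
    using spec_rad_approx[of "restr0 K f", OF restr0_nonneg \<open>0 < \<epsilon>\<close>] by blast
  obtain y e where y: "pos_vec y" and "0 < e"
    and y_sub: "\<And>i. i \<in> J - K \<Longrightarrow> f (proj0 (J - K) y + e *\<^sub>R 1) $ i < (spec_rad (restr0 (J - K) f) + \<epsilon>) * y $ i"
    using spec_rad_restr0_approx_shift[OF \<open>0 < \<epsilon>\<close>] by blast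
  have "(spec_rad (restr0 K f) + \<epsilon>) * x $ i \<le> (?R + \<epsilon>) * x $ i"
    and "(spec_rad (restr0 (J - K) f) + \<epsilon>) * y $ i \<le> (?R + \<epsilon>) * y $ i" for i
    using c x y by (simp_all add: mult_right_mono pos_vec_def less_imp_le)
  then have x_le: "restr0 K f x $ i \<le> (?R + \<epsilon>) * x $ i"
    and y_le: "i \<in> J - K \<Longrightarrow> f (proj0 (J - K) y + e *\<^sub>R 1) $ i \<le> (?R + \<epsilon>) * y $ i" for i
    using x_sub[of i] y_sub[of i] by (simp_all add: less_imp_le order_less_le_trans)
  obtain z where "pos_vec z" and "\<And>i. restr0 J f z $ i \<le> (?R + \<epsilon>) * z $ i"
    using restr0_glue_sub_eigenvectors[OF assms x x_le y \<open>0 < e\<close> y_le c(3)] by blast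
  then show "spec_rad (restr0 J f) \<le> ?R + \<epsilon>"
    using restr0_nonneg by (intro spec_rad_le) 
qed

lemma spec_rad_restr0_le_scc:
  assumes "J \<noteq> {}"
  shows "\<exists>C. scc f C \<and> C \<inter> J \<noteq> {} \<and> spec_rad (restr0 J f) \<le> spec_rad (restr0 C f)"
  using assms
proof (induction "card J" arbitrary: J rule: less_induct)
  case less
  obtain K where K: "K \<subseteq> J" "K \<noteq> {}"
    and no_arc: "\<And>k j. k \<in> K \<Longrightarrow> j \<in> J - K \<Longrightarrow> \<not> graph_arc f k j"
    and "\<And>k k'. k \<in> K \<Longrightarrow> k' \<in> K \<Longrightarrow> (graph_arc f)\<^sup>*\<^sup>* k k'"
    using ex_closed_strongly_connected_subset[OF finite less.prems] by blast
  then obtain C where C: "scc f C" "K \<subseteq> C"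
    using ex_scc_superset by blast
  then have "C \<inter> J \<noteq> {}" and rK: "spec_rad (restr0 K f) \<le> spec_rad (restr0 C f)"
    using K by (blast, simp add: spec_rad_restr0_mono)
  show ?case
  proof (cases "J - K = {}")
    case True
    then have "J = K"
      using K(1) by blast
    then show ?thesis
      using C(1) \<open>C \<inter> J \<noteq> {}\<close> rK by blast
  next
    case False
    moreover have "card (J - K) < card J"
      using K by (intro psubset_card_mono) auto
    ultimately obtain C' where C': "scc f C'" "C' \<inter> (J - K) \<noteq> {}"
      and rL: "spec_rad (restr0 (J - K) f) \<le> spec_rad (restr0 C' f)"
      using less.hyps by blast
    have "spec_rad (restr0 J f) \<le> max (spec_rad (restr0 K f)) (spec_rad (restr0 (J - K) f))"
      using K(1) no_arc by (rule spec_rad_restr0_le_max)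
    then have "spec_rad (restr0 J f) \<le> spec_rad (restr0 C f) \<or> spec_rad (restr0 J f) \<le> spec_rad (restr0 C' f)"
      using rK rL by linarith
    then show ?thesis
      using C(1) C' \<open>C \<inter> J \<noteq> {}\<close> by blast
  qed
qed

lemma spec_rad_le_max_final_class:
  assumes "final_class f C"
  shows "spec_rad f \<le> max (spec_rad (restr0 C f)) (spec_rad (restr0 (- C) f))"
proof -
  have "\<And>i j. i \<in> C \<Longrightarrow> j \<in> UNIV - C \<Longrightarrow> \<not> graph_arc f i j"
    using assms by (auto simp: final_class_def)
  then have "spec_rad (restr0 UNIV f) \<le> max (spec_rad (restr0 C f)) (spec_rad (restr0 (UNIV - C) f))"
    by (rule spec_rad_restr0_le_max[OF subset_UNIV])
  moreover have "UNIV - C = - C"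
    by blast
  ultimately show ?thesis
    by (simp only: spec_rad_restr0_UNIV)
qed

lemma spec_rad_restr0_Compl_less:
  assumes "strongly_nonneg f" and "final_class f C" and "\<forall>C'. final_class f C' \<longrightarrow> C' = C"
  shows "spec_rad (restr0 (- C) f) < spec_rad f"
proof (cases "- C = {}")
  case True
  show ?thesis
    unfolding True spec_rad_restr0_empty by (rule spec_rad_pos)
next
  case False
  then obtain C' where C': "scc f C'" "C' \<inter> - C \<noteq> {}"
    and le_C': "spec_rad (restr0 (- C) f) \<le> spec_rad (restr0 C' f)"
    using spec_rad_restr0_le_scc[OF False] by blast
  have "\<not> final_class f C'"
    using C'(2) assms(3) by blast
  then have "spec_rad (restr0 C' f) < spec_rad f"
    using assms(1) C'(1) by (simp add: strongly_nonneg_def)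
  then show ?thesis
    using le_C' by linarith
qed

end

theorem lemma4p8:
  fixes f :: "real^'n \<Rightarrow> real^'n" and C :: "'n set"
  assumes "pos_self_map f" and "order_preserving f" and "homogeneous f" and "mult_convex f"
    and "final_class f C" and "\<forall>C'. final_class f C' \<longrightarrow> C' = C"
  shows "strongly_nonneg f \<longleftrightarrow> spec_rad (restr0 (- C) f) < spec_rad (restr0 C f)"
proof -
  interpret mult_convex_cone_map f
    using assms(1-4) by unfold_locales
  show ?thesis
  proof
    assume sn: "strongly_nonneg f"
    then have "spec_rad (restr0 C f) = spec_rad f"
      using assms(5) unfolding strongly_nonneg_def by blast
    then show "spec_rad (restr0 (- C) f) < spec_rad (restr0 C f)"
      using spec_rad_restr0_Compl_less[OF sn assms(5,6)] by simp
  next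
    assume less: "spec_rad (restr0 (- C) f) < spec_rad (restr0 C f)"
    then have r_C: "spec_rad (restr0 C f) = spec_rad f"
      using spec_rad_le_max_final_class[OF assms(5)] spec_rad_restr0_le[of C] by linarith
    have "spec_rad (restr0 C' f) < spec_rad f" if "scc f C'" and "\<not> final_class f C'" for C'
    proof -
      have "C' \<subseteq> - C"
        using scc_subset_Compl_final_class[OF assms(5) that(1)] that(2) assms(5) by blast
      then show ?thesis
        using spec_rad_restr0_mono[of C' "- C"] less r_C by linarith
    qed
    then show "strongly_nonneg f"
      using assms(6) r_C unfolding strongly_nonneg_def by blast
  qed
qed

end
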